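(* Let $(G,L)$ be a labelled edge-coloured digraph. Then, in $\mathrm{NCQSym}(\mathbf{x})$, $$\Delta(\mathscr{Y}_{(G,L)}(\mathbf{x}))=\sum_F\mathscr{Y}_{(G|_{V(G)-V(F)},\,L_{V(G)-V(F)})}(\mathbf{x})\otimes\mathscr{Y}_{(F,\,L_{V(F)})}(\mathbf{x}),$$ where the sum runs over all $\{\rightarrow,\Rightarrow\}$-induced subdigraphs $F$ of $G$.
   Context: An edge-coloured digraph is a finite simple digraph with each edge dashed ($\dashrightarrow$), solid ($\rightarrow$) or double ($\Rightarrow$); a proper vertex-colouring is $\kappa:V\to\mathbb{P}$ with $\kappa(a)\ne\kappa(b)$, $\kappa(a)<\kappa(b)$, $\kappa(a)\le\kappa(b)$ for dashed, solid, double edges $(a,b)$ respectively. A labelled edge-coloured digraph $(G,L)$ has a bijection $L:V(G)\to[|V(G)|]$, and $\mathscr{Y}_{(G,L)}(\mathbf{x})=\sum_\kappa\mathbf{x}_{\kappa(L^{-1}(1))}\cdots\mathbf{x}_{\kappa(L^{-1}(|V(G)|))}$ over proper vertex-colourings, in noncommuting variables (equal to $1$ for the empty digraph). For $A\subseteq V(G)$, $G|_A$ is the induced subdigraph on $A$ with edge types kept, and $L_A:A\to[|A|]$ is $L_A(a)=\mathrm{std}_B(L(a))$ where $B=L(A)$ and $\mathrm{std}_B:B\to[|B|]$ is the unique order-preserving bijection. An induced subdigraph $F$ is $\{\rightarrow,\Rightarrow\}$-induced if $a\in V(F)$ and $a\rightarrow b$ or $a\Rightarrow b$ in $G$ imply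 $b\in V(F)$. $\mathrm{NCQSym}(\mathbf{x})$ is the space of bounded-degree series $f$ in noncommuting $\mathbf{x}$ such that for each set composition $\Phi=(\Phi_1|\cdots|\Phi_k)$ of $[n]$ all monomials $\mathbf{x}_{i_1}\cdots\mathbf{x}_{i_n}$ with $i_j=i_\ell$ for $j,\ell$ in a common block and $i_j<i_\ell$ for $j\in\Phi_p,\ell\in\Phi_q$, $p<q$, have equal coefficients; its coproduct evaluates $f$ on $\mathbf{x}_1<\mathbf{x}_2<\cdots<\mathbf{y}_1<\mathbf{y}_2<\cdots$, imposes $\mathbf{x}_i\mathbf{y}_j=\mathbf{y}_j\mathbf{x}_i$, reads the result as $\sum f_1(\mathbf{x})\otimes f_2(\mathbf{y})$ and replaces $\mathbf{y}$ by $\mathbf{x}$. *)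

theory Defs
  imports Main
begin

text \<open>Edge types: dashed, solid (single arrow), double arrow.\<close>
datatype ecol = Dashed | Solid | Double

definition ec_digraph :: "'a set \<Rightarrow> ('a \<Rightarrow> 'a \<Rightarrow> ecol option) \<Rightarrow> bool" where
  "ec_digraph V E \<longleftrightarrow> finite V \<and> (\<forall>a. E a a = None) \<and>
     (\<forall>a b. E a b \<noteq> None \<longrightarrow> a \<in> V \<and> b \<in> V)"

definition labelling :: "'a set \<Rightarrow> ('a \<Rightarrow> nat) \<Rightarrow> bool" where
  "labelling V L \<longleftrightarrow> bij_betw L V {1..card V}"

definition proper_col :: "'a set \<Rightarrow> ('a \<Rightarrow> 'a \<Rightarrow> ecol option) \<Rightarrow> ('a \<Rightarrow> nat) \<Rightarrow> bool" where
  "proper_col A E \<kappa> \<longleftrightarrow> (\<forall>a\<in>A. \<kappa> a \<ge> 1) \<and>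
     (\<forall>a\<in>A. \<forall>b\<in>A.
        (E a b = Some Dashed \<longrightarrow> \<kappa> a \<noteq> \<kappa> b) \<and>
        (E a b = Some Solid \<longrightarrow> \<kappa> a < \<kappa> b) \<and>
        (E a b = Some Double \<longrightarrow> \<kappa> a \<le> \<kappa> b))"

text \<open>Noncommutative series in x_1, x_2, ...: a coefficient function on
  words (lists of variable indices). Letter i stands for x_i (i \<ge> 1).\<close>
type_synonym ncseries = "nat list \<Rightarrow> int"
type_synonym ncseries2 = "nat list \<times> nat list \<Rightarrow> int"

text \<open>The chromatic function Y_{(A,L)} of the induced subdigraph on A with
  labelling L: the coefficient of x_{w_1}...x_{w_n} is the number of proper
  colourings \<kappa> with \<kappa>(L^{-1}(i)) = w_i, which is 0 or 1.\<close>
definition chromY :: "'a set \<Rightarrow> ('a \<Rightarrow> 'a \<Rightarrow> ecol option) \<Rightarrow> ('a \<Rightarrow> nat) \<Rightarrow> ncseries" where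
  "chromY A E L w = int (card {\<kappa>. (\<forall>a. a \<notin> A \<longrightarrow> \<kappa> a = 0) \<and> proper_col A E \<kappa> \<and>
        length w = card A \<and> (\<forall>i \<in> {1..card A}. w ! (i - 1) = \<kappa> (the_inv_into A L i))})"

definition std_lab :: "('a \<Rightarrow> nat) \<Rightarrow> 'a set \<Rightarrow> 'a \<Rightarrow> nat" where
  "std_lab L A a = card {b \<in> A. L b \<le> L a}"

definition arrow_closed :: "'a set \<Rightarrow> ('a \<Rightarrow> 'a \<Rightarrow> ecol option) \<Rightarrow> 'a set \<Rightarrow> bool" where
  "arrow_closed V E F \<longleftrightarrow> F \<subseteq> V \<and>
     (\<forall>a\<in>F. \<forall>b. (E a b = Some Solid \<or> E a b = Some Double) \<longrightarrow> b \<in> F)"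

text \<open>NCQSym: bounded degree, only monomials in x_1,x_2,...,
  coefficients constant on monomials of the same set-composition pattern.\<close>
definition ncqsym :: "ncseries \<Rightarrow> bool" where
  "ncqsym f \<longleftrightarrow> (\<exists>d. \<forall>w. f w \<noteq> 0 \<longrightarrow> length w \<le> d) \<and>
     (\<forall>w. 0 \<in> set w \<longrightarrow> f w = 0) \<and>
     (\<forall>w w'. length w = length w' \<and> 0 \<notin> set w \<and> 0 \<notin> set w' \<and>
        (\<forall>i<length w. \<forall>j<length w. (w!i < w!j \<longleftrightarrow> w'!i < w'!j) \<and> (w!i = w!j \<longleftrightarrow> w'!i = w'!j))
        \<longrightarrow> f w = f w')"

fun merge :: "bool list \<Rightarrow> 'b list \<Rightarrow> 'b list \<Rightarrow> 'b list" where
  "merge [] xs ys = []"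
| "merge (True # ms) xs ys = hd xs # merge ms (tl xs) ys"
| "merge (False # ms) xs ys = hd ys # merge ms xs (tl ys)"

text \<open>Coproduct: the coefficient of u \<otimes> v in \<Delta> f is the sum of the coefficients
  in f(x_1<x_2<...<y_1<y_2<...) of all words whose x-part is u and y-part is v.
  The coefficient of such a word is that of the order-isomorphic word over
  x_1,x_2,... obtained by shifting the y-letters above all x-letters
  (well defined for f in NCQSym, and letters of u, v positive).\<close>
definition coprod :: "ncseries \<Rightarrow> ncseries2" where
  "coprod f = (\<lambda>(u, v). if 0 \<in> set u \<or> 0 \<in> set v then 0 else
      (\<Sum>ms \<in> {ms. length ms = length u + length v \<and> length (filter id ms) = length u}.
         f (merge ms u (map (\<lambda>j. j + Max (insert 0 (set u))) v))))"

definition tensor :: "ncseries \<Rightarrow> ncseries \<Rightarrow> ncseries2" where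
  "tensor f g = (\<lambda>(u, v). f u * g v)"

end

theory Submission
  imports Defs
begin

(* A word w of length |V| determines the colouring that gives the vertex labelled i the colour w_i,
   so the coefficient of w in Y_(G,L) is 1 if that colouring is proper and 0 otherwise; since
   properness only depends on the relative order of the colours, Y_(G,L) is quasisymmetric.
   In the coproduct, a word in x_1 < x_2 < ... < y_1 < y_2 < ... splits V into the vertices V - F
   coloured by x-letters and the vertices F coloured by y-letters. Every y-colour exceeds every
   x-colour, so edges from V - F to F are always respected, while an edge from F to V - F is
   respected only if it is dashed. Hence the colouring is proper iff F is {->,=>}-induced and both
   restrictions are proper, and standardising the labels on V - F and on F turns the restrictions
   into the colourings read off the x-part and the y-part of the word. *)

fun edge_ok :: "ecol \<Rightarrow> nat \<Rightarrow> nat \<Rightarrow> bool" where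
  "edge_ok Dashed x y \<longleftrightarrow> x \<noteq> y"
| "edge_ok Solid x y \<longleftrightarrow> x < y"
| "edge_ok Double x y \<longleftrightarrow> x \<le> y"

lemma edge_ok_order_cong:
  assumes "x < y \<longleftrightarrow> x' < y'" and "x = y \<longleftrightarrow> x' = y'"
  shows "edge_ok c x y \<longleftrightarrow> edge_ok c x' y'"
  using assms by (cases c) (auto simp: le_less)

lemma all_edge_ok_iff:
  "(\<forall>c. e = Some c \<longrightarrow> edge_ok c x y) \<longleftrightarrow>
     (e = Some Dashed \<longrightarrow> x \<noteq> y) \<and> (e = Some Solid \<longrightarrow> x < y) \<and> (e = Some Double \<longrightarrow> x \<le> y)"
proof (cases e)
  case (Some c)
  then show ?thesis by (cases c) auto
qed simp

lemma proper_col_iff_edge_ok: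
  "proper_col A E \<kappa> \<longleftrightarrow> (\<forall>a\<in>A. 1 \<le> \<kappa> a) \<and>
     (\<forall>a\<in>A. \<forall>b\<in>A. \<forall>c. E a b = Some c \<longrightarrow> edge_ok c (\<kappa> a) (\<kappa> b))"
  by (simp only: proper_col_def all_edge_ok_iff)

lemma proper_col_order_cong:
  assumes order: "\<And>a b. a \<in> A \<Longrightarrow> b \<in> A \<Longrightarrow>
      (\<kappa> a < \<kappa> b \<longleftrightarrow> \<kappa>' a < \<kappa>' b) \<and> (\<kappa> a = \<kappa> b \<longleftrightarrow> \<kappa>' a = \<kappa>' b)"
    and "\<And>a. a \<in> A \<Longrightarrow> 1 \<le> \<kappa> a" and "\<And>a. a \<in> A \<Longrightarrow> 1 \<le> \<kappa>' a"
  shows "proper_col A E \<kappa> \<longleftrightarrow> proper_col A E \<kappa>'"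
proof -
  have "edge_ok c (\<kappa> a) (\<kappa> b) \<longleftrightarrow> edge_ok c (\<kappa>' a) (\<kappa>' b)" if "a \<in> A" "b \<in> A" for a b c
    using order[OF that] by (intro edge_ok_order_cong) auto
  then show ?thesis using assms(2,3) unfolding proper_col_iff_edge_ok by auto
qed

lemma proper_col_Un:
  "proper_col (A \<union> B) E \<kappa> \<longleftrightarrow> proper_col A E \<kappa> \<and> proper_col B E \<kappa> \<and>
     (\<forall>a\<in>A. \<forall>b\<in>B. \<forall>c. E a b = Some c \<longrightarrow> edge_ok c (\<kappa> a) (\<kappa> b)) \<and>
     (\<forall>a\<in>B. \<forall>b\<in>A. \<forall>c. E a b = Some c \<longrightarrow> edge_ok c (\<kappa> a) (\<kappa> b))"
  unfolding proper_col_iff_edge_ok ball_Un by blast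

lemma arrow_closed_iff_out_edges_dashed:
  assumes G: "ec_digraph V E" and FV: "F \<subseteq> V"
  shows "arrow_closed V E F \<longleftrightarrow> (\<forall>a\<in>F. \<forall>b\<in>V - F. \<forall>c. E a b = Some c \<longrightarrow> c = Dashed)"
proof
  assume closed: "arrow_closed V E F"
  show "\<forall>a\<in>F. \<forall>b\<in>V - F. \<forall>c. E a b = Some c \<longrightarrow> c = Dashed"
  proof (intro ballI allI impI)
    fix a b c assume "a \<in> F" "b \<in> V - F" and edge: "E a b = Some c"
    with closed have "E a b \<noteq> Some Solid" "E a b \<noteq> Some Double"
      unfolding arrow_closed_def by blast+
    with edge show "c = Dashed" by (cases c) auto
  qed
next
  assume only_dashed: "\<forall>a\<in>F. \<forall>b\<in>V - F. \<forall>c. E a b = Some c \<longrightarrow> c = Dashed"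
  show "arrow_closed V E F"
    unfolding arrow_closed_def
  proof (intro conjI FV ballI allI impI)
    fix a b assume "a \<in> F" and arrow: "E a b = Some Solid \<or> E a b = Some Double"
    then have "b \<in> V" using G unfolding ec_digraph_def by (metis option.distinct(1))
    show "b \<in> F"
    proof (rule ccontr)
      assume "b \<notin> F"
      with only_dashed \<open>a \<in> F\<close> \<open>b \<in> V\<close> have "\<forall>c. E a b = Some c \<longrightarrow> c = Dashed" by blast
      with arrow show False by auto
    qed
  qed
qed

lemma proper_col_split_above:
  assumes G: "ec_digraph V E" and FV: "F \<subseteq> V"
    and low: "\<And>a. a \<in> V - F \<Longrightarrow> \<kappa> a = \<kappa>\<^sub>1 a \<and> 1 \<le> \<kappa>\<^sub>1 a \<and> \<kappa>\<^sub>1 a \<le> M"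
    and high: "\<And>a. a \<in> F \<Longrightarrow> \<kappa> a = \<kappa>\<^sub>2 a + M \<and> 1 \<le> \<kappa>\<^sub>2 a"
  shows "proper_col V E \<kappa> \<longleftrightarrow> arrow_closed V E F \<and> proper_col (V - F) E \<kappa>\<^sub>1 \<and> proper_col F E \<kappa>\<^sub>2"
proof -
  have low_part: "proper_col (V - F) E \<kappa> \<longleftrightarrow> proper_col (V - F) E \<kappa>\<^sub>1"
    by (rule proper_col_order_cong) (use low in fastforce)+
  have high_part: "proper_col F E \<kappa> \<longleftrightarrow> proper_col F E \<kappa>\<^sub>2"
    by (rule proper_col_order_cong) (use high in fastforce)+
  have upward: "\<forall>a\<in>V - F. \<forall>b\<in>F. \<forall>c. E a b = Some c \<longrightarrow> edge_ok c (\<kappa> a) (\<kappa> b)"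
  proof (intro ballI allI impI)
    fix a b c assume "a \<in> V - F" "b \<in> F"
    then have "\<kappa> a < \<kappa> b" using low[of a] high[of b] by linarith
    then show "edge_ok c (\<kappa> a) (\<kappa> b)" by (cases c) auto
  qed
  have "edge_ok c (\<kappa> a) (\<kappa> b) \<longleftrightarrow> c = Dashed" if "a \<in> F" "b \<in> V - F" for a b c
    using low[OF that(2)] high[OF that(1)] by (cases c) auto
  then have downward: "(\<forall>a\<in>F. \<forall>b\<in>V - F. \<forall>c. E a b = Some c \<longrightarrow> edge_ok c (\<kappa> a) (\<kappa> b))
      \<longleftrightarrow> arrow_closed V E F"
    using arrow_closed_iff_out_edges_dashed[OF G FV] by auto
  have "V - F \<union> F = V" using FV by blast
  then show ?thesis
    using proper_col_Un[of "V - F" F E \<kappa>] low_part high_part upward downward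
    by (simp add: conj_commute conj_left_commute)
qed

definition word_colouring :: "'a set \<Rightarrow> ('a \<Rightarrow> nat) \<Rightarrow> nat list \<Rightarrow> 'a \<Rightarrow> nat" where
  "word_colouring A L w a = (if a \<in> A then w ! (L a - 1) else 0)"

lemma labelling_finite: "labelling A L \<Longrightarrow> finite A"
  unfolding labelling_def using bij_betw_finite by blast

lemma labelling_label_range: "labelling A L \<Longrightarrow> a \<in> A \<Longrightarrow> L a \<in> {1..card A}"
  unfolding labelling_def using bij_betwE by blast

lemma labelling_the_inv_into:
  assumes "labelling A L" and "i \<in> {1..card A}"
  shows "the_inv_into A L i \<in> A" and "L (the_inv_into A L i) = i"
  using assms unfolding labelling_def
  by (metis bij_betw_def the_inv_into_into subset_refl, metis f_the_inv_into_f_bij_betw)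

lemma chromY_eq_indicator:
  assumes lab: "labelling A L"
  shows "chromY A E L w = (if length w = card A \<and> proper_col A E (word_colouring A L w) then 1 else 0)"
proof -
  have inj: "inj_on L A" using lab unfolding labelling_def bij_betw_def by blast
  have reads_w: "(\<forall>a. a \<notin> A \<longrightarrow> \<kappa> a = 0) \<and> (\<forall>i \<in> {1..card A}. w ! (i - 1) = \<kappa> (the_inv_into A L i))
      \<longleftrightarrow> \<kappa> = word_colouring A L w" for \<kappa>
  proof -
    have "(\<forall>i \<in> {1..card A}. w ! (i - 1) = \<kappa> (the_inv_into A L i)) \<longleftrightarrow> (\<forall>a \<in> A. w ! (L a - 1) = \<kappa> a)"
      using labelling_the_inv_into[OF lab] labelling_label_range[OF lab] the_inv_into_f_f[OF inj]
      by metis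
    then show ?thesis unfolding word_colouring_def by (auto simp: fun_eq_iff)
  qed
  have "{\<kappa>. (\<forall>a. a \<notin> A \<longrightarrow> \<kappa> a = 0) \<and> proper_col A E \<kappa> \<and> length w = card A \<and>
        (\<forall>i \<in> {1..card A}. w ! (i - 1) = \<kappa> (the_inv_into A L i))}
      = {\<kappa>. \<kappa> = word_colouring A L w \<and> length w = card A \<and> proper_col A E (word_colouring A L w)}"
    by (intro Collect_cong) (metis reads_w)
  then show ?thesis unfolding chromY_def by simp
qed

lemma word_colouring_mem_set:
  assumes "labelling A L" and "length w = card A" and "a \<in> A"
  shows "word_colouring A L w a \<in> set w"
  using labelling_label_range[OF assms(1,3)] assms(2,3) by (auto simp: word_colouring_def intro!: nth_mem)

lemma chromY_zero_letter:
  assumes lab: "labelling A L" and "0 \<in> set w"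
  shows "chromY A E L w = 0"
proof -
  have "\<not> proper_col A E (word_colouring A L w)" if len: "length w = card A"
  proof
    assume proper: "proper_col A E (word_colouring A L w)"
    obtain j where j: "j < length w" "w ! j = 0" using \<open>0 \<in> set w\<close> by (metis in_set_conv_nth)
    then have "Suc j \<in> {1..card A}" using len by simp
    note vertex = labelling_the_inv_into[OF lab this]
    then have "word_colouring A L w (the_inv_into A L (Suc j)) = 0"
      using j by (simp add: word_colouring_def)
    with proper vertex(1) show False unfolding proper_col_def by fastforce
  qed
  then show ?thesis by (simp add: chromY_eq_indicator[OF lab])
qed

lemma chromY_order_cong:
  assumes lab: "labelling A L" and len: "length w = length w'" and pos: "0 \<notin> set w" "0 \<notin> set w'"
    and pattern: "\<And>i j. i < length w \<Longrightarrow> j < length w \<Longrightarrow>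
       (w!i < w!j \<longleftrightarrow> w'!i < w'!j) \<and> (w!i = w!j \<longleftrightarrow> w'!i = w'!j)"
  shows "chromY A E L w = chromY A E L w'"
proof (cases "length w = card A")
  case True
  have index: "L a - 1 < length w" if "a \<in> A" for a
    using labelling_label_range[OF lab that] True by auto
  have "proper_col A E (word_colouring A L w) \<longleftrightarrow> proper_col A E (word_colouring A L w')"
  proof (rule proper_col_order_cong)
    fix a b assume "a \<in> A" "b \<in> A"
    then show "(word_colouring A L w a < word_colouring A L w b \<longleftrightarrow> word_colouring A L w' a < word_colouring A L w' b) \<and>
        (word_colouring A L w a = word_colouring A L w b \<longleftrightarrow> word_colouring A L w' a = word_colouring A L w' b)"
      using pattern index by (simp add: word_colouring_def)
  next
    fix a assume "a \<in> A"
    then show "1 \<le> word_colouring A L w a"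
      using word_colouring_mem_set[OF lab True] pos(1) by (metis less_one not_less)
  next
    fix a assume "a \<in> A"
    then show "1 \<le> word_colouring A L w' a"
      using word_colouring_mem_set[OF lab True[unfolded len]] pos(2) by (metis less_one not_less)
  qed
  then show ?thesis using len by (simp add: chromY_eq_indicator[OF lab])
next
  case False
  then show ?thesis using len by (simp add: chromY_eq_indicator[OF lab])
qed

lemma ncqsym_chromY:
  assumes lab: "labelling A L"
  shows "ncqsym (chromY A E L)"
  unfolding ncqsym_def
proof (intro conjI allI impI)
  show "\<exists>d. \<forall>w. chromY A E L w \<noteq> 0 \<longrightarrow> length w \<le> d"
    by (intro exI[of _ "card A"]) (simp add: chromY_eq_indicator[OF lab])
  show "chromY A E L w = 0" if "0 \<in> set w" for w
    using chromY_zero_letter[OF lab that] .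
  show "chromY A E L w = chromY A E L w'"
    if "length w = length w' \<and> 0 \<notin> set w \<and> 0 \<notin> set w' \<and>
      (\<forall>i<length w. \<forall>j<length w. (w!i < w!j \<longleftrightarrow> w'!i < w'!j) \<and> (w!i = w!j \<longleftrightarrow> w'!i = w'!j))" for w w'
    using that by (intro chromY_order_cong[OF lab]) auto
qed

lemma std_lab_strict_mono:
  assumes "finite A" and "a \<in> A" and "b \<in> A" and "L a < L b"
  shows "std_lab L A a < std_lab L A b"
proof -
  have "{c \<in> A. L c \<le> L a} \<subseteq> {c \<in> A. L c \<le> L b}" using assms(4) by auto
  moreover have "b \<in> {c \<in> A. L c \<le> L b} - {c \<in> A. L c \<le> L a}" using assms(3,4) by auto
  ultimately show ?thesis unfolding std_lab_def using assms(1) by (intro psubset_card_mono) auto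
qed

lemma labelling_std_lab:
  assumes fin: "finite A" and inj: "inj_on L A"
  shows "labelling A (std_lab L A)"
proof -
  have inj_std: "inj_on (std_lab L A) A"
  proof (rule inj_onI)
    fix a b assume "a \<in> A" "b \<in> A" "std_lab L A a = std_lab L A b"
    then have "L a = L b"
      using std_lab_strict_mono[OF fin] by (metis less_irrefl linorder_neqE_nat)
    then show "a = b" using inj \<open>a \<in> A\<close> \<open>b \<in> A\<close> by (simp add: inj_on_eq_iff)
  qed
  have range: "std_lab L A ` A \<subseteq> {1..card A}"
  proof
    fix x assume "x \<in> std_lab L A ` A"
    then obtain a where a: "a \<in> A" "x = std_lab L A a" by blast
    have "a \<in> {b \<in> A. L b \<le> L a}" and "{b \<in> A. L b \<le> L a} \<subseteq> A" using a by auto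
    then have "1 \<le> card {b \<in> A. L b \<le> L a}" and "card {b \<in> A. L b \<le> L a} \<le> card A"
      using fin by (auto simp: card_gt_0_iff Suc_le_eq intro: card_mono)
    then show "x \<in> {1..card A}" using a by (simp add: std_lab_def)
  qed
  have "card (std_lab L A ` A) = card {1..card A}" using card_image[OF inj_std] by simp
  then have "std_lab L A ` A = {1..card A}" using card_subset_eq[OF _ range] by simp
  with inj_std show ?thesis unfolding labelling_def bij_betw_def by blast
qed

lemma card_labelled_prefix:
  assumes lab: "labelling V L" and len: "length ms = card V" and k: "k \<le> card V"
  shows "card {a \<in> V. L a \<le> k \<and> P (ms ! (L a - 1))} = length (filter P (take k ms))"
proof -
  define S where "S = {a \<in> V. L a \<le> k \<and> P (ms ! (L a - 1))}"
  define T where "T = {i. i < k \<and> P (ms ! i)}"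
  have inj: "inj_on L S" using lab unfolding labelling_def bij_betw_def S_def by (auto intro: inj_on_subset)
  have "L ` S = Suc ` T"
  proof (intro equalityI subsetI)
    fix x assume "x \<in> L ` S"
    then obtain a where "a \<in> S" "x = L a" by blast
    moreover have "1 \<le> L a" using labelling_label_range[OF lab] \<open>a \<in> S\<close> by (auto simp: S_def)
    ultimately show "x \<in> Suc ` T" unfolding S_def T_def by (auto intro!: image_eqI[of _ _ "L a - 1"])
  next
    fix x assume "x \<in> Suc ` T"
    then obtain i where i: "i < k" "P (ms ! i)" "x = Suc i" unfolding T_def by blast
    then have "Suc i \<in> {1..card V}" using k by simp
    note vertex = labelling_the_inv_into[OF lab this]
    then have "the_inv_into V L (Suc i) \<in> S" using i unfolding S_def by simp
    then show "x \<in> L ` S" using vertex(2) i(3) by (metis image_eqI)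
  qed
  then have "card S = card T" using card_image[OF inj] by (simp add: card_image)
  also have "card T = length (filter P (take k ms))"
    unfolding length_filter_conv_card T_def using k len by (intro arg_cong[where f = card]) auto
  finally show ?thesis unfolding S_def .
qed

lemma card_labelled_mask:
  assumes "labelling V L" and "length ms = card V"
  shows "card {a \<in> V. P (ms ! (L a - 1))} = length (filter P ms)"
proof -
  have "{a \<in> V. L a \<le> card V \<and> P (ms ! (L a - 1))} = {a \<in> V. P (ms ! (L a - 1))}"
    using labelling_label_range[OF assms(1)] by auto
  then show ?thesis using card_labelled_prefix[OF assms, of "card V" P] assms(2) by simp
qed

lemma std_lab_mask:
  assumes lab: "labelling V L" and len: "length ms = card V" and a: "a \<in> V" and "P (ms ! (L a - 1))"
  shows "std_lab L {b \<in> V. P (ms ! (L b - 1))} a - 1 = length (filter P (take (L a - 1) ms))"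
proof -
  have range: "L a = Suc (L a - 1)" "L a - 1 < length ms"
    using labelling_label_range[OF lab a] len by auto
  have "{b \<in> {b \<in> V. P (ms ! (L b - 1))}. L b \<le> L a} = {b \<in> V. L b \<le> L a \<and> P (ms ! (L b - 1))}"
    by auto
  then have "std_lab L {b \<in> V. P (ms ! (L b - 1))} a = length (filter P (take (L a) ms))"
    unfolding std_lab_def
    using card_labelled_prefix[OF lab len] labelling_label_range[OF lab a] by simp
  also have "take (L a) ms = take (L a - 1) ms @ [ms ! (L a - 1)]"
    using range by (metis take_Suc_conv_app_nth)
  finally show ?thesis using \<open>P (ms ! (L a - 1))\<close> by simp
qed

lemma length_merge: "length (merge ms xs ys) = length ms"
  by (induction ms xs ys rule: merge.induct) auto

lemma nth_merge:
  assumes "length (filter id ms) = length xs" and "length (filter Not ms) = length ys" and "k < length ms"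
  shows "merge ms xs ys ! k =
    (if ms ! k then xs ! length (filter id (take k ms)) else ys ! length (filter Not (take k ms)))"
  using assms
proof (induction ms xs ys arbitrary: k rule: merge.induct)
  case (1 xs ys)
  then show ?case by simp
next
  case (2 ms xs ys)
  then obtain x xs' where "xs = x # xs'" by (cases xs) auto
  with 2 show ?case by (cases k) (auto simp: id_def)
next
  case (3 ms xs ys)
  then obtain y ys' where "ys = y # ys'" by (cases ys) auto
  with 3 show ?case by (cases k) (auto simp: id_def)
qed

lemma bij_betw_mask_vertices:
  assumes lab: "labelling V L"
  shows "bij_betw (\<lambda>ms. {a \<in> V. \<not> ms ! (L a - 1)}) {ms. length ms = card V} (Pow V)"
proof (rule bij_betw_byWitness[where f' = "\<lambda>F. map (\<lambda>i. the_inv_into V L (Suc i) \<notin> F) [0..<card V]"])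
  show "\<forall>ms\<in>{ms. length ms = card V}.
      map (\<lambda>i. the_inv_into V L (Suc i) \<notin> {a \<in> V. \<not> ms ! (L a - 1)}) [0..<card V] = ms"
  proof
    fix ms :: "bool list" assume "ms \<in> {ms. length ms = card V}"
    moreover have "the_inv_into V L (Suc i) \<in> V \<and> L (the_inv_into V L (Suc i)) = Suc i"
      if "i < card V" for i
      using labelling_the_inv_into[OF lab, of "Suc i"] that by simp
    ultimately show "map (\<lambda>i. the_inv_into V L (Suc i) \<notin> {a \<in> V. \<not> ms ! (L a - 1)}) [0..<card V] = ms"
      by (auto intro!: nth_equalityI)
  qed
  have inv: "the_inv_into V L (L a) = a" if "a \<in> V" for a
    using lab that unfolding labelling_def bij_betw_def by (simp add: the_inv_into_f_f)
  show "\<forall>F\<in>Pow V. {a \<in> V. \<not> map (\<lambda>i. the_inv_into V L (Suc i) \<notin> F) [0..<card V] ! (L a - 1)} = F"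
    using labelling_label_range[OF lab] inv by (fastforce simp: Suc_le_eq)
qed auto

lemma labelling_std_lab_subset:
  assumes "labelling V L" and "A \<subseteq> V"
  shows "labelling A (std_lab L A)"
proof (rule labelling_std_lab)
  show "finite A" using labelling_finite[OF assms(1)] assms(2) by (rule finite_subset[rotated])
  show "inj_on L A" using assms unfolding labelling_def bij_betw_def by (auto intro: inj_on_subset)
qed

lemma word_colouring_map:
  assumes "labelling A L" and "length w = card A" and "a \<in> A"
  shows "word_colouring A L (map f w) a = f (word_colouring A L w a)"
  using labelling_label_range[OF assms(1,3)] assms(2,3) by (auto simp: word_colouring_def)

lemma word_colouring_merge:
  assumes lab: "labelling V L" and len: "length ms = card V"
    and len_xs: "length (filter id ms) = length xs" and len_ys: "length (filter Not ms) = length ys"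
    and a: "a \<in> V"
  shows "word_colouring V L (merge ms xs ys) a =
    (if ms ! (L a - 1)
     then word_colouring {b \<in> V. ms ! (L b - 1)} (std_lab L {b \<in> V. ms ! (L b - 1)}) xs a
     else word_colouring {b \<in> V. \<not> ms ! (L b - 1)} (std_lab L {b \<in> V. \<not> ms ! (L b - 1)}) ys a)"
proof -
  have index: "L a - 1 < length ms" using labelling_label_range[OF lab a] len by auto
  show ?thesis
  proof (cases "ms ! (L a - 1)")
    case True
    then show ?thesis
      using nth_merge[OF len_xs len_ys index] std_lab_mask[OF lab len a, of id] a
      by (simp add: word_colouring_def)
  next
    case False
    then show ?thesis
      using nth_merge[OF len_xs len_ys index] std_lab_mask[OF lab len a, of Not] a
      by (simp add: word_colouring_def)
  qed
qed

lemma word_colouring_merge_shift: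
  assumes lab: "labelling V L" and len: "length ms = card V"
    and len_u: "length (filter id ms) = length u" and len_v: "length (filter Not ms) = length v"
  defines "F \<equiv> {a \<in> V. \<not> ms ! (L a - 1)}"
  shows "a \<in> V - F \<Longrightarrow>
      word_colouring V L (merge ms u (map (\<lambda>j. j + M) v)) a = word_colouring (V - F) (std_lab L (V - F)) u a"
    and "a \<in> F \<Longrightarrow>
      word_colouring V L (merge ms u (map (\<lambda>j. j + M) v)) a = word_colouring F (std_lab L F) v a + M"
proof -
  have VF: "{b \<in> V. ms ! (L b - 1)} = V - F" and F: "{b \<in> V. \<not> ms ! (L b - 1)} = F"
    unfolding F_def by auto
  have card_F: "card F = length v"
    using card_labelled_mask[OF lab len, of Not] len_v unfolding F[symmetric] by simp
  have lab_F: "labelling F (std_lab L F)"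
    using labelling_std_lab_subset[OF lab] unfolding F_def by auto
  note merge = word_colouring_merge[OF lab len len_u, of "map (\<lambda>j. j + M) v", unfolded VF F]
  show "word_colouring V L (merge ms u (map (\<lambda>j. j + M) v)) a = word_colouring (V - F) (std_lab L (V - F)) u a"
    if "a \<in> V - F"
    using merge[of a] that len_v unfolding F_def by auto
  show "word_colouring V L (merge ms u (map (\<lambda>j. j + M) v)) a = word_colouring F (std_lab L F) v a + M"
    if "a \<in> F"
    using merge[of a] that len_v word_colouring_map[OF lab_F card_F[symmetric] that] unfolding F_def by auto
qed

lemma chromY_merge:
  assumes G: "ec_digraph V E" and lab: "labelling V L"
    and u: "0 \<notin> set u" "\<forall>x \<in> set u. x \<le> M" and v: "0 \<notin> set v"
    and len: "length ms = card V" and len_u: "length (filter id ms) = length u"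
    and len_uv: "length u + length v = card V"
  defines "F \<equiv> {a \<in> V. \<not> ms ! (L a - 1)}"
  shows "chromY V E L (merge ms u (map (\<lambda>j. j + M) v)) =
    (if arrow_closed V E F then chromY (V - F) E (std_lab L (V - F)) u * chromY F E (std_lab L F) v else 0)"
proof -
  have len_v: "length (filter Not ms) = length v"
    using sum_length_filter_compl[of id ms] len len_u len_uv by simp
  have "V - F = {a \<in> V. id (ms ! (L a - 1))}" unfolding F_def by auto
  then have card_VF: "card (V - F) = length u"
    using card_labelled_mask[OF lab len, of id] len_u by simp
  have card_F: "card F = length v"
    using card_labelled_mask[OF lab len, of Not] len_v unfolding F_def by simp
  have lab_VF: "labelling (V - F) (std_lab L (V - F))" and lab_F: "labelling F (std_lab L F)"
    using labelling_std_lab_subset[OF lab] unfolding F_def by auto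
  define w where "w = merge ms u (map (\<lambda>j. j + M) v)"
  define \<kappa>\<^sub>1 where "\<kappa>\<^sub>1 = word_colouring (V - F) (std_lab L (V - F)) u"
  define \<kappa>\<^sub>2 where "\<kappa>\<^sub>2 = word_colouring F (std_lab L F) v"
  note shift = word_colouring_merge_shift[OF lab len len_u len_v, of _ M, folded F_def w_def]
  have low: "word_colouring V L w a = \<kappa>\<^sub>1 a \<and> 1 \<le> \<kappa>\<^sub>1 a \<and> \<kappa>\<^sub>1 a \<le> M" if "a \<in> V - F" for a
  proof -
    have "\<kappa>\<^sub>1 a \<in> set u"
      unfolding \<kappa>\<^sub>1_def using word_colouring_mem_set[OF lab_VF card_VF[symmetric] that] .
    then have "\<kappa>\<^sub>1 a \<noteq> 0 \<and> \<kappa>\<^sub>1 a \<le> M" using u by metis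
    then show ?thesis using shift(1)[OF that] unfolding \<kappa>\<^sub>1_def by simp
  qed
  have high: "word_colouring V L w a = \<kappa>\<^sub>2 a + M \<and> 1 \<le> \<kappa>\<^sub>2 a" if "a \<in> F" for a
  proof -
    have "\<kappa>\<^sub>2 a \<in> set v"
      unfolding \<kappa>\<^sub>2_def using word_colouring_mem_set[OF lab_F card_F[symmetric] that] .
    then have "\<kappa>\<^sub>2 a \<noteq> 0" using v by metis
    then show ?thesis using shift(2)[OF that] unfolding \<kappa>\<^sub>2_def by simp
  qed
  have "F \<subseteq> V" unfolding F_def by blast
  note proper_col_split_above[OF G this low high]
  moreover have "length w = card V" using len unfolding w_def by (simp add: length_merge)
  ultimately show ?thesis
    unfolding w_def[symmetric] \<kappa>\<^sub>1_def \<kappa>\<^sub>2_def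
    by (simp add: chromY_eq_indicator[OF lab] chromY_eq_indicator[OF lab_VF] chromY_eq_indicator[OF lab_F]
        card_VF card_F)
qed

lemma chromY_parts_mult_eq_0:
  assumes lab: "labelling V L" and "F \<subseteq> V"
    and "card (V - F) \<noteq> length u \<or> card F \<noteq> length v"
  shows "chromY (V - F) E (std_lab L (V - F)) u * chromY F E (std_lab L F) v = 0"
  using assms labelling_std_lab_subset[OF lab, of "V - F"] labelling_std_lab_subset[OF lab, of F]
  by (auto simp: chromY_eq_indicator)

lemma sum_masks_chromY_merge:
  assumes G: "ec_digraph V E" and lab: "labelling V L"
    and u: "0 \<notin> set u" "\<forall>x \<in> set u. x \<le> M" and v: "0 \<notin> set v"
    and len_uv: "length u + length v = card V"
  shows "(\<Sum>ms | length ms = length u + length v \<and> length (filter id ms) = length u.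
            chromY V E L (merge ms u (map (\<lambda>j. j + M) v)))
       = (\<Sum>F \<in> Pow V. if arrow_closed V E F
            then chromY (V - F) E (std_lab L (V - F)) u * chromY F E (std_lab L F) v else 0)"
    (is "(\<Sum>ms \<in> ?MS. _) = (\<Sum>F \<in> _. ?h F)")
proof -
  define mask_set where "mask_set ms = {a \<in> V. \<not> ms ! (L a - 1)}" for ms :: "bool list"
  have bij: "bij_betw mask_set {ms. length ms = card V} (Pow V)"
    unfolding mask_set_def by (rule bij_betw_mask_vertices[OF lab])
  have "(\<Sum>F \<in> Pow V. ?h F) = (\<Sum>ms \<in> {ms. length ms = card V}. ?h (mask_set ms))"
    using sum.reindex_bij_betw[OF bij, of ?h] by (rule sym)
  also have "\<dots> = (\<Sum>ms \<in> ?MS. ?h (mask_set ms))"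
  proof (rule sum.mono_neutral_right)
    show "finite {ms :: bool list. length ms = card V}"
      using bij labelling_finite[OF lab] bij_betw_finite by blast
    show "?MS \<subseteq> {ms. length ms = card V}" using len_uv by auto
    show "\<forall>ms \<in> {ms. length ms = card V} - ?MS. ?h (mask_set ms) = 0"
    proof
      fix ms assume ms: "ms \<in> {ms. length ms = card V} - ?MS"
      have "V - mask_set ms = {a \<in> V. id (ms ! (L a - 1))}" unfolding mask_set_def by auto
      then have "card (V - mask_set ms) = length (filter id ms)"
        using card_labelled_mask[OF lab, of ms id] ms by simp
      then have "card (V - mask_set ms) \<noteq> length u" using ms len_uv by auto
      then show "?h (mask_set ms) = 0"
        using chromY_parts_mult_eq_0[OF lab] unfolding mask_set_def by auto
    qed
  qed
  also have "\<dots> = (\<Sum>ms \<in> ?MS. chromY V E L (merge ms u (map (\<lambda>j. j + M) v)))"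
    using chromY_merge[OF G lab u v _ _ len_uv] len_uv unfolding mask_set_def
    by (intro sum.cong) simp_all
  finally show ?thesis by (rule sym)
qed

lemma coprod_chromY:
  assumes G: "ec_digraph V E" and lab: "labelling V L"
  shows "coprod (chromY V E L) (u, v) =
    (\<Sum>F \<in> {F. arrow_closed V E F}. chromY (V - F) E (std_lab L (V - F)) u * chromY F E (std_lab L F) v)"
    (is "_ = (\<Sum>F \<in> _. ?g F)")
proof (cases "0 \<in> set u \<or> 0 \<in> set v")
  case True
  have "?g F = 0" if "arrow_closed V E F" for F
  proof -
    have "F \<subseteq> V" using that unfolding arrow_closed_def by blast
    then have "labelling (V - F) (std_lab L (V - F))" and "labelling F (std_lab L F)"
      using labelling_std_lab_subset[OF lab] by auto
    then show ?thesis using True chromY_zero_letter by auto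
  qed
  then have "(\<Sum>F \<in> {F. arrow_closed V E F}. ?g F) = 0" by (intro sum.neutral) blast
  then show ?thesis using True unfolding coprod_def by simp
next
  case False
  define M where "M = Max (insert 0 (set u))"
  define MS where "MS = {ms. length ms = length u + length v \<and> length (filter id ms) = length u}"
  have fin: "finite V" using labelling_finite[OF lab] .
  have lhs: "coprod (chromY V E L) (u, v) = (\<Sum>ms \<in> MS. chromY V E L (merge ms u (map (\<lambda>j. j + M) v)))"
    using False unfolding coprod_def MS_def M_def by simp
  have "{F. arrow_closed V E F} = {F \<in> Pow V. arrow_closed V E F}" unfolding arrow_closed_def by blast
  then have rhs: "(\<Sum>F \<in> {F. arrow_closed V E F}. ?g F) = (\<Sum>F \<in> Pow V. if arrow_closed V E F then ?g F else 0)"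
    using fin by (simp only:) (rule sum.inter_filter, simp)
  show ?thesis
  proof (cases "length u + length v = card V")
    case True
    have "\<forall>x \<in> set u. x \<le> M" unfolding M_def by simp
    then show ?thesis
      using sum_masks_chromY_merge[OF G lab _ _ _ True] False lhs rhs unfolding MS_def by simp
  next
    case False
    have "chromY V E L (merge ms u (map (\<lambda>j. j + M) v)) = 0" if "ms \<in> MS" for ms
      using that False by (simp add: MS_def chromY_eq_indicator[OF lab] length_merge)
    moreover have "(\<Sum>F \<in> Pow V. if arrow_closed V E F then ?g F else 0) = 0"
    proof (intro sum.neutral ballI)
      fix F assume "F \<in> Pow V"
      then have "card (V - F) + card F = card V"
        using fin by (simp add: card_Diff_subset card_mono finite_subset)
      then show "(if arrow_closed V E F then ?g F else 0) = 0"
        using chromY_parts_mult_eq_0[OF lab] \<open>F \<in> Pow V\<close> False by auto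
    qed
    ultimately show ?thesis using lhs rhs by simp
  qed
qed

theorem mainTheorem10:
  fixes V :: "'a set" and E :: "'a \<Rightarrow> 'a \<Rightarrow> ecol option" and L :: "'a \<Rightarrow> nat"
  assumes "ec_digraph V E" and "labelling V L"
  shows "ncqsym (chromY V E L) \<and>
    coprod (chromY V E L) =
      (\<lambda>uv. \<Sum>F \<in> {F. arrow_closed V E F}.
          tensor (chromY (V - F) E (std_lab L (V - F))) (chromY F E (std_lab L F)) uv)"
proof
  show "ncqsym (chromY V E L)" using ncqsym_chromY[OF assms(2)] .
  show "coprod (chromY V E L) =
      (\<lambda>uv. \<Sum>F \<in> {F. arrow_closed V E F}.
          tensor (chromY (V - F) E (std_lab L (V - F))) (chromY F E (std_lab L F)) uv)"
    using coprod_chromY[OF assms] by (auto simp: tensor_def)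
qed

end
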